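(* For all integers $K>t>1$, $$s\!\left(\binom{K}{t},\ K,\ \binom{K-1}{t-1}\right)=\frac{\binom{K}{t}(K-t)}{t+1}=\binom{K}{t+1}.$$
   Context: A placement delivery array $S$-PDA$(F,K,Z)$ is an $F\times K$ array $R=(r_{j,k})$, $1\le j\le F$, $1\le k\le K$, over a finite set $S$ such that: (1) each cell is either empty or contains an element of $S$; (2) each column contains exactly $Z$ empty cells; (3) each element of $S$ occurs at most once in each row and at most once in each column; (4) if two distinct nonempty cells satisfy $r_{j_1,k_1}=r_{j_2,k_2}=t\in S$, then the cells $r_{j_1,k_2}$ and $r_{j_2,k_1}$ are empty. For integers $F,K\ge1$, $0\le Z\le F$, define $s(F,K,Z)=\min\{|S| : \text{there exists an } S\text{-PDA}(F,K,Z)\}$. *)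

theory Defs
  imports Main
begin

text \<open>An F x K array over S: rows 0..F-1, columns 0..K-1; cell (j,k) is
  None (empty) or Some t with t in S. Symbols are taken to be natural numbers
  (any finite symbol set can be relabelled into nat).\<close>

definition is_PDA :: "nat set \<Rightarrow> nat \<Rightarrow> nat \<Rightarrow> nat \<Rightarrow> (nat \<Rightarrow> nat \<Rightarrow> nat option) \<Rightarrow> bool" where
  "is_PDA S F K Z R \<longleftrightarrow>
     finite S \<and>
     (\<forall>j<F. \<forall>k<K. \<forall>t. R j k = Some t \<longrightarrow> t \<in> S) \<and>
     (\<forall>k<K. card {j. j < F \<and> R j k = None} = Z) \<and>
     (\<forall>j<F. \<forall>k1<K. \<forall>k2<K. \<forall>t. R j k1 = Some t \<and> R j k2 = Some t \<longrightarrow> k1 = k2) \<and>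
     (\<forall>k<K. \<forall>j1<F. \<forall>j2<F. \<forall>t. R j1 k = Some t \<and> R j2 k = Some t \<longrightarrow> j1 = j2) \<and>
     (\<forall>j1<F. \<forall>j2<F. \<forall>k1<K. \<forall>k2<K. \<forall>t.
        (j1, k1) \<noteq> (j2, k2) \<and> R j1 k1 = Some t \<and> R j2 k2 = Some t \<longrightarrow>
        R j1 k2 = None \<and> R j2 k1 = None)"

definition s_PDA :: "nat \<Rightarrow> nat \<Rightarrow> nat \<Rightarrow> nat" where
  "s_PDA F K Z = (LEAST n. \<exists>S R. is_PDA S F K Z R \<and> card S = n)"

end

theory Submission
  imports Defs Complex_Main
begin

text \<open>Lower bound: if a symbol occurs g times, then by conditions (3) and (4) every row containing
  it has at least g - 1 empty cells. So if each nonempty cell of row j gets weight 1/(e_j + 1),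
  where e_j is the number of empty cells of row j, every symbol carries total weight at most 1,
  and |S| \<ge> \<Sum>_j (K - e_j)/(e_j + 1). Since \<Sum>_j e_j = KZ = tF, the tangent of the convex
  function x \<mapsto> (K - x)/(x + 1) at x = t yields |S| \<ge> F(K - t)/(t + 1).
  Upper bound: index the rows by the t-subsets T of {0..K-1} and the symbols by the (t+1)-subsets;
  cell (T, k) is empty if k \<in> T and holds the symbol T \<union> {k} otherwise.\<close>

definition row_empties :: "nat \<Rightarrow> (nat \<Rightarrow> nat \<Rightarrow> nat option) \<Rightarrow> nat \<Rightarrow> nat" where
  "row_empties K R j = card {k. k < K \<and> R j k = None}"

definition occurrences :: "nat \<Rightarrow> nat \<Rightarrow> (nat \<Rightarrow> nat \<Rightarrow> nat option) \<Rightarrow> nat \<Rightarrow> (nat \<times> nat) set" where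
  "occurrences F K R s = {(j, k). j < F \<and> k < K \<and> R j k = Some s}"

lemma is_PDA_symbol_mem:
  "is_PDA S F K Z R \<Longrightarrow> j < F \<Longrightarrow> k < K \<Longrightarrow> R j k = Some s \<Longrightarrow> s \<in> S"
  unfolding is_PDA_def by (elim conjE) meson

lemma is_PDA_finite: "is_PDA S F K Z R \<Longrightarrow> finite S"
  unfolding is_PDA_def by (elim conjE)

lemma is_PDA_column_empties:
  "is_PDA S F K Z R \<Longrightarrow> k < K \<Longrightarrow> card {j. j < F \<and> R j k = None} = Z"
  unfolding is_PDA_def by simp

lemma is_PDA_column_unique:
  "is_PDA S F K Z R \<Longrightarrow> k < K \<Longrightarrow> j1 < F \<Longrightarrow> j2 < F \<Longrightarrow>
    R j1 k = Some s \<Longrightarrow> R j2 k = Some s \<Longrightarrow> j1 = j2"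
  unfolding is_PDA_def by (elim conjE) meson

lemma is_PDA_cross_empty:
  "is_PDA S F K Z R \<Longrightarrow> j1 < F \<Longrightarrow> j2 < F \<Longrightarrow> k1 < K \<Longrightarrow> k2 < K \<Longrightarrow>
    (j1, k1) \<noteq> (j2, k2) \<Longrightarrow> R j1 k1 = Some s \<Longrightarrow> R j2 k2 = Some s \<Longrightarrow> R j1 k2 = None"
  unfolding is_PDA_def by (elim conjE) meson

lemma card_row_nonempties:
  "card {k. k < K \<and> R j k \<noteq> None} = K - row_empties K R j"
proof -
  have "{k. k < K \<and> R j k \<noteq> None} = {..<K} - {k. k < K \<and> R j k = None}" by auto
  then show ?thesis
    unfolding row_empties_def by (simp add: card_Diff_subset subset_eq)
qed

lemma row_empties_le: "row_empties K R j \<le> K"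
  unfolding row_empties_def by (rule card_mono[of "{..<K}", simplified]) auto

lemma card_bounded_filter_eq_sum:
  "card {k. k < (n::nat) \<and> P k} = (\<Sum>k<n. if P k then 1 else 0)"
  using sum.inter_filter[OF finite_lessThan[of n], where g = "\<lambda>_. 1::nat" and P = P] by simp

lemma PDA_sum_row_empties:
  assumes "is_PDA S F K Z R"
  shows "(\<Sum>j<F. row_empties K R j) = K * Z"
proof -
  have "(\<Sum>j<F. row_empties K R j) = (\<Sum>j<F. \<Sum>k<K. if R j k = None then 1 else 0)"
    by (simp add: row_empties_def card_bounded_filter_eq_sum)
  also have "\<dots> = (\<Sum>k<K. \<Sum>j<F. if R j k = None then 1 else 0)"
    by (rule sum.swap)
  also have "\<dots> = (\<Sum>k<K. card {j. j < F \<and> R j k = None})"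
    by (simp add: card_bounded_filter_eq_sum)
  also have "\<dots> = (\<Sum>k<K. Z)"
    using assms by (simp add: is_PDA_column_empties)
  finally show ?thesis by simp
qed

lemma finite_occurrences: "finite (occurrences F K R s)"
  by (rule finite_subset[of _ "{..<F} \<times> {..<K}"]) (auto simp: occurrences_def)

lemma PDA_card_occurrences_le:
  assumes P: "is_PDA S F K Z R" and jk: "j < F" "k < K" "R j k = Some s"
  shows "card (occurrences F K R s) \<le> row_empties K R j + 1"
proof -
  let ?D = "occurrences F K R s - {(j, k)}"
  have "inj_on snd ?D"
    by (rule inj_onI) (auto simp: occurrences_def dest: is_PDA_column_unique[OF P])
  moreover have "snd ` ?D \<subseteq> {k. k < K \<and> R j k = None}"
    using jk by (auto simp: occurrences_def intro: is_PDA_cross_empty[OF P])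
  ultimately have "card ?D \<le> row_empties K R j"
    unfolding row_empties_def by (simp add: card_inj_on_le)
  moreover have "finite (occurrences F K R s)"
    by (rule finite_occurrences)
  moreover have "(j, k) \<in> occurrences F K R s"
    using jk by (simp add: occurrences_def)
  ultimately show ?thesis by (simp add: card_Diff_singleton_if)
qed

lemma PDA_occurrence_weight_le_1:
  assumes P: "is_PDA S F K Z R"
  shows "(\<Sum>c\<in>occurrences F K R s. 1 / real (row_empties K R (fst c) + 1)) \<le> 1"
proof (cases "occurrences F K R s = {}")
  case False
  let ?g = "card (occurrences F K R s)"
  have g_pos: "?g > 0"
    using False finite_occurrences by (simp add: card_gt_0_iff)
  have "1 / real (row_empties K R (fst c) + 1) \<le> 1 / real ?g"
    if "c \<in> occurrences F K R s" for c
  proof -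
    obtain j k where c: "c = (j, k)" by (cases c)
    with that have "j < F" "k < K" "R j k = Some s" by (auto simp: occurrences_def)
    then have "?g \<le> row_empties K R j + 1"
      by (rule PDA_card_occurrences_le[OF P])
    with c g_pos show ?thesis by (intro frac_le) simp_all
  qed
  then have "(\<Sum>c\<in>occurrences F K R s. 1 / real (row_empties K R (fst c) + 1)) \<le> ?g * (1 / ?g)"
    by (rule sum_bounded_above)
  with g_pos show ?thesis by simp
qed simp

lemma PDA_card_ge_weighted_rows:
  assumes P: "is_PDA S F K Z R"
  shows "(\<Sum>j<F. (real K - real (row_empties K R j)) / (real (row_empties K R j) + 1)) \<le> real (card S)"
proof -
  define w where "w c = 1 / real (row_empties K R (fst c) + 1)" for c :: "nat \<times> nat"
  define C where "C = (SIGMA j:{..<F}. {k. k < K \<and> R j k \<noteq> None})"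
  define symbol where "symbol c = the (R (fst c) (snd c))" for c :: "nat \<times> nat"
  have "(\<Sum>j<F. (real K - real (row_empties K R j)) / (real (row_empties K R j) + 1))
      = (\<Sum>j<F. \<Sum>k\<in>{k. k < K \<and> R j k \<noteq> None}. w (j, k))"
    by (simp add: w_def card_row_nonempties row_empties_le add.commute del: not_None_eq)
  also have "\<dots> = sum w C"
    unfolding C_def by (subst sum.Sigma) auto
  also have "\<dots> = (\<Sum>s\<in>S. sum w {c \<in> C. symbol c = s})"
    by (intro sum.group[symmetric])
      (auto simp: C_def symbol_def is_PDA_finite[OF P] intro: is_PDA_symbol_mem[OF P])
  also have "\<dots> = (\<Sum>s\<in>S. sum w (occurrences F K R s))"
    by (intro sum.cong arg_cong2[where f = sum] refl) (auto simp: C_def symbol_def occurrences_def)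
  also have "\<dots> \<le> (\<Sum>s\<in>S. 1)"
    unfolding w_def by (intro sum_mono PDA_occurrence_weight_le_1[OF P])
  finally show ?thesis by simp
qed

lemma inverse_succ_ge_tangent:
  fixes x t :: real
  assumes "x \<ge> 0" "t \<ge> 0"
  shows "1 / (t + 1) - (x - t) / (t + 1)^2 \<le> 1 / (x + 1)"
proof -
  have "(2 * t + 1 - x) * (x + 1) \<le> (t + 1)^2"
    using zero_le_power2[of "t - x"] by (simp add: power2_eq_square algebra_simps)
  then have "(2 * t + 1 - x) / (t + 1)^2 \<le> 1 / (x + 1)"
    using assms by (simp add: field_simps)
  moreover have "1 / (t + 1) - (x - t) / (t + 1)^2 = (2 * t + 1 - x) / (t + 1)^2"
    using assms by (simp add: divide_simps power2_eq_square)
  ultimately show ?thesis by simp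
qed

lemma PDA_card_lower_bound_real:
  assumes P: "is_PDA S F K Z R" and KZ: "K * Z = t * F"
  shows "real F * (real K - real t) / (real t + 1) \<le> real (card S)"
proof -
  define e where "e j = real (row_empties K R j)" for j
  define c where "c = real K + 1"
  define d where "d = c / (real t + 1)^2"
  have sum_e: "(\<Sum>j<F. e j - real t) = 0"
    using arg_cong[OF PDA_sum_row_empties[OF P], of real] KZ
    by (simp add: e_def sum_subtractf)
  have tangent: "c / (real t + 1) - 1 - d * (e j - real t) \<le> (real K - e j) / (e j + 1)" for j
  proof -
    have "c / (real t + 1) - d * (e j - real t) = c * (1 / (real t + 1) - (e j - real t) / (real t + 1)^2)"
      by (simp add: d_def right_diff_distrib diff_divide_distrib)
    also have "\<dots> \<le> c * (1 / (e j + 1))"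
      by (intro mult_left_mono inverse_succ_ge_tangent) (simp_all add: c_def e_def)
    also have "\<dots> - 1 = (real K - e j) / (e j + 1)"
      by (simp add: c_def e_def field_simps)
    finally show ?thesis by simp
  qed
  have "F * (c / (real t + 1) - 1) - d * (\<Sum>j<F. e j - real t)
      = (\<Sum>j<F. c / (real t + 1) - 1 - d * (e j - real t))"
    unfolding sum_distrib_left by (simp add: sum_subtractf)
  also have "\<dots> \<le> (\<Sum>j<F. (real K - e j) / (e j + 1))"
    by (intro sum_mono tangent)
  also have "\<dots> \<le> card S"
    using PDA_card_ge_weighted_rows[OF P] by (simp add: e_def)
  finally show ?thesis
    by (simp add: sum_e c_def field_simps)
qed

lemma PDA_card_lower_bound:
  assumes "is_PDA S F K Z R" and "K * Z = t * F"
  shows "F * (K - t) \<le> (t + 1) * card S"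
proof (cases "t \<le> K")
  case True
  have "real F * (real K - real t) \<le> (real t + 1) * real (card S)"
    using PDA_card_lower_bound_real[OF assms] by (simp add: pos_divide_le_eq mult.commute)
  with True have "real (F * (K - t)) \<le> real ((t + 1) * card S)"
    by (simp add: algebra_simps)
  then show ?thesis by linarith
qed simp

lemma card_subsets_containing:
  assumes "finite A" "a \<in> A" "0 < t"
  shows "card {T. T \<subseteq> A \<and> card T = t \<and> a \<in> T} = (card A - 1) choose (t - 1)"
proof -
  let ?U = "{U. U \<subseteq> A - {a} \<and> card U = t - 1}"
  have "{T. T \<subseteq> A \<and> card T = t \<and> a \<in> T} = insert a ` ?U"
  proof (intro equalityI subsetI)
    fix T assume "T \<in> {T. T \<subseteq> A \<and> card T = t \<and> a \<in> T}"
    then have "T - {a} \<in> ?U" "T = insert a (T - {a})"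
      using assms finite_subset[of T A] by auto
    then show "T \<in> insert a ` ?U" by blast
  next
    fix T assume "T \<in> insert a ` ?U"
    then obtain U where "U \<in> ?U" "T = insert a U" by blast
    moreover from this have "finite U"
      using assms(1) finite_subset by blast
    ultimately show "T \<in> {T. T \<subseteq> A \<and> card T = t \<and> a \<in> T}"
      using assms by (auto simp: card_insert_if)
  qed
  moreover have "inj_on (insert a) ?U"
    by (rule inj_onI) (metis Diff_iff insert_ident mem_Collect_eq singletonI subsetD)
  ultimately show ?thesis
    using assms by (simp add: card_image n_subsets)
qed

definition subset_PDA :: "(nat \<Rightarrow> nat set) \<Rightarrow> (nat set \<Rightarrow> nat) \<Rightarrow> nat \<Rightarrow> nat \<Rightarrow> nat option" where
  "subset_PDA h g j k = (if k \<in> h j then None else Some (g (insert k (h j))))"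

lemma subset_PDA_eq_Some:
  "subset_PDA h g j k = Some s \<longleftrightarrow> k \<notin> h j \<and> s = g (insert k (h j))"
  by (auto simp: subset_PDA_def)

lemma is_PDA_subset_PDA:
  assumes h: "bij_betw h {..<F} {T. T \<subseteq> {..<K} \<and> card T = t}"
    and g: "inj_on g {T. T \<subseteq> {..<K} \<and> card T = Suc t}"
    and gS: "g ` {T. T \<subseteq> {..<K} \<and> card T = Suc t} \<subseteq> S"
    and "finite S" "0 < t"
  shows "is_PDA S F K ((K - 1) choose (t - 1)) (subset_PDA h g)"
proof -
  have h_row: "h j \<subseteq> {..<K}" "card (h j) = t" "finite (h j)" if "j < F" for j
    using that h finite_subset[of "h j" "{..<K}"] by (auto simp: bij_betw_def)
  have h_inj: "h j1 = h j2 \<Longrightarrow> j1 < F \<Longrightarrow> j2 < F \<Longrightarrow> j1 = j2" for j1 j2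
    using h by (auto simp: bij_betw_def inj_on_def)
  have label: "insert k (h j) \<in> {T. T \<subseteq> {..<K} \<and> card T = Suc t}"
    if "j < F" "k < K" "k \<notin> h j" for j k
    using that h_row[of j] by auto
  have same_label: "insert k1 (h j1) = insert k2 (h j2) \<and> k1 \<notin> h j1 \<and> k2 \<notin> h j2"
    if "j1 < F" "j2 < F" "k1 < K" "k2 < K"
      "subset_PDA h g j1 k1 = Some s" "subset_PDA h g j2 k2 = Some s" for j1 j2 k1 k2 s
    using that label g by (auto simp: subset_PDA_eq_Some inj_on_def)
  have column: "card {j. j < F \<and> subset_PDA h g j k = None} = (K - 1) choose (t - 1)"
    if "k < K" for k
  proof -
    have "h ` {j \<in> {..<F}. k \<in> h j} = {T \<in> h ` {..<F}. k \<in> T}"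
      by blast
    then have "bij_betw h {j \<in> {..<F}. k \<in> h j} {T. T \<subseteq> {..<K} \<and> card T = t \<and> k \<in> T}"
      using h bij_betw_imp_surj_on[OF h] by (auto intro: bij_betw_subset)
    moreover have "{j. j < F \<and> subset_PDA h g j k = None} = {j \<in> {..<F}. k \<in> h j}"
      by (auto simp: subset_PDA_def)
    ultimately show ?thesis
      using card_subsets_containing[of "{..<K}" k t] that \<open>0 < t\<close> by (simp add: bij_betw_same_card)
  qed
  have cross: "subset_PDA h g j1 k2 = None"
    if "j1 < F" "j2 < F" "k1 < K" "k2 < K" "(j1, k1) \<noteq> (j2, k2)"
      "subset_PDA h g j1 k1 = Some s" "subset_PDA h g j2 k2 = Some s" for j1 j2 k1 k2 s
  proof -
    have eq: "insert k1 (h j1) = insert k2 (h j2)" and "k1 \<notin> h j1" "k2 \<notin> h j2"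
      using same_label[OF that(1-4,6,7)] by blast+
    have "k1 \<noteq> k2"
      using that(1,2,5) h_inj eq \<open>k1 \<notin> h j1\<close> \<open>k2 \<notin> h j2\<close> insert_ident by metis
    with eq show ?thesis by (auto simp: subset_PDA_def)
  qed
  show ?thesis
    unfolding is_PDA_def
  proof (intro conjI allI impI)
    fix j k s assume "j < F" "k < K" "subset_PDA h g j k = Some s"
    then show "s \<in> S"
      using label gS by (auto simp: subset_PDA_eq_Some)
  next
    fix j k1 k2 s assume "j < F" "k1 < K" "k2 < K"
      "subset_PDA h g j k1 = Some s \<and> subset_PDA h g j k2 = Some s"
    then show "k1 = k2" using same_label[of j j k1 k2 s] by blast
  next
    fix k j1 j2 s assume "k < K" "j1 < F" "j2 < F"
      "subset_PDA h g j1 k = Some s \<and> subset_PDA h g j2 k = Some s"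
    then show "j1 = j2" using same_label[of j1 j2 k k s] h_inj insert_ident by metis
  next
    fix j1 j2 k1 k2 s assume "j1 < F" "j2 < F" "k1 < K" "k2 < K"
      "(j1, k1) \<noteq> (j2, k2) \<and> subset_PDA h g j1 k1 = Some s \<and> subset_PDA h g j2 k2 = Some s"
    then show "subset_PDA h g j1 k2 = None" "subset_PDA h g j2 k1 = None"
      using cross[of j1 j2 k1 k2 s] cross[of j2 j1 k2 k1 s] by auto
  qed (use column \<open>finite S\<close> in auto)
qed

lemma ex_subset_PDA:
  assumes "0 < t"
  shows "\<exists>S R. is_PDA S (K choose t) K ((K - 1) choose (t - 1)) R \<and> card S = K choose Suc t"
proof -
  have fin: "finite {T. T \<subseteq> {..<K} \<and> card T = m}" for m :: nat
    by (rule finite_subset[of _ "Pow {..<K}"]) auto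
  have card: "card {T. T \<subseteq> {..<K} \<and> card T = m} = K choose m" for m
    by (simp add: n_subsets)
  obtain h where "bij_betw h {..<K choose t} {T. T \<subseteq> {..<K} \<and> card T = t}"
    using ex_bij_betw_nat_finite[OF fin[of t]] by (auto simp: card atLeast0LessThan)
  moreover obtain g where "bij_betw g {T. T \<subseteq> {..<K} \<and> card T = Suc t} {..<K choose Suc t}"
    using ex_bij_betw_finite_nat[OF fin[of "Suc t"]] by (auto simp: card atLeast0LessThan)
  ultimately have "is_PDA {..<K choose Suc t} (K choose t) K ((K - 1) choose (t - 1)) (subset_PDA h g)"
    using assms by (intro is_PDA_subset_PDA) (auto simp: bij_betw_def)
  then show ?thesis by fastforce
qed

theorem mainTheorem11:
  fixes K t :: nat
  assumes "1 < t" and "t < K"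
  shows "s_PDA (K choose t) K ((K - 1) choose (t - 1)) = (K choose t) * (K - t) div (t + 1)
       \<and> (K choose t) * (K - t) div (t + 1) = K choose (t + 1)
       \<and> (t + 1) dvd (K choose t) * (K - t)"
proof -
  have t_pos: "0 < t" using assms by simp
  have rows: "K * ((K - 1) choose (t - 1)) = t * (K choose t)"
    using times_binomial_minus1_eq[OF t_pos] by simp
  have absorb: "(K choose t) * (K - t) = (t + 1) * (K choose (t + 1))"
    using binomial_absorb_comp[of K t] binomial_absorption[of t K] by (simp add: mult.commute)
  have "s_PDA (K choose t) K ((K - 1) choose (t - 1)) = K choose (t + 1)"
    unfolding s_PDA_def
  proof (rule Least_equality)
    show "\<exists>S R. is_PDA S (K choose t) K ((K - 1) choose (t - 1)) R \<and> card S = K choose (t + 1)"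
      using ex_subset_PDA[OF t_pos] by simp
  next
    fix n assume "\<exists>S R. is_PDA S (K choose t) K ((K - 1) choose (t - 1)) R \<and> card S = n"
    then obtain S R where "is_PDA S (K choose t) K ((K - 1) choose (t - 1)) R" "card S = n"
      by blast
    with PDA_card_lower_bound[OF _ rows] absorb show "K choose (t + 1) \<le> n"
      by (metis mult_le_cancel1 zero_less_Suc Suc_eq_plus1)
  qed
  moreover have "(t + 1) * (K choose (t + 1)) div (t + 1) = K choose (t + 1)"
    by (rule nonzero_mult_div_cancel_left) simp
  ultimately show ?thesis
    unfolding absorb by (simp only: dvd_triv_left simp_thms)
qed

end
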